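(* Let $\Phi=\forall u_1\ldots\forall u_n\exists e_1(D_1)\ldots\exists e_m(D_m).\varphi$ be a DQBF with prefix $\mathcal{Q}$, let $A$ be a set of arbiter variables with arbiter clauses $\varphi_A$, and let $C_1,\ldots,C_k$ be clauses such that for each $i$, $C_i$ is a forcing clause in $\varphi\wedge\varphi_A\wedge\bigwedge_{1\le j<i}C_j$. Then the DQBF $\mathcal{Q}\exists A(\emptyset).\varphi\wedge\varphi_A\wedge\bigwedge_{1\le i\le k}C_i$ is true if and only if $\Phi$ is true.
   Context: For a set $V$ of variables, $[V]$ is the set of assignments $V\to\{\textsc{true},\textsc{false}\}$; assignments are identified with terms of the literals they make true, $\neg\sigma$ is the clause of the negations of these literals, and $\sigma|_W$ denotes restriction to (the part of the domain lying in) $W$. A DQBF is $\forall u_1\ldots\forall u_n\exists e_1(D_1)\ldots\exists e_m(D_m).\varphi$ with pairwise distinct variables, $U=\{u_i\}$, $E=\{e_j\}$, dependency sets $D(e_j)=D_j\subseteq U$, and $\varphi$ a CNF over $U\cup E$; a model is a family $F=(F_e)_{e}$ with $F_e:[D(e)]\to\{\textsc{true},\textsc{false}\}$ such that for every $\sigma\in[U]$, $\sigma\cup F(\sigma)$ satisfies the matrix, where $F(\sigma)$ assigns each existential $e$ the value $F_e(\sigma|_{D(e)})$; the DQBF is true iff it has a model. Arbiter variables: for $e\in E$, $\sigma\in[D(e)]$, $e^\sigma$ is a fresh variable; for a set $A$ of them, $\varphi_A=\bigwedge_{e^\sigma\in A}\big((e^\sigma\vee\neg\sigma\vee\neg e)\wedge(\neg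 e^\sigma\vee\neg\sigma\vee e)\big)$. For a CNF $\psi$, $\mathcal{Q}\exists A(\emptyset).\psi$ is the DQBF whose prefix is that of $\Phi$ extended by every variable of $A$ as an existential variable with empty dependency set, and whose matrix is $\psi$. Forcing: let $\ell$ be a literal on a variable in $E$, $\psi$ a formula with $\mathit{var}(\psi)\subseteq U\cup E\cup A$, and $\sigma$ a partial assignment to $U\cup A$; $\ell$ is forced by $\sigma$ in $\psi$ if $\psi\wedge\sigma\wedge\neg\ell$ is unsatisfiable, and in that case $\neg(\sigma|_{D(\mathit{var}(\ell))\cup A})\vee\ell$ is called a forcing clause in $\psi$. *)

theory Defs
  imports Main
begin

type_synonym 'x lit = "'x \<times> bool"          \<comment> \<open>(variable, polarity); (x,True) = x, (x,False) = not x\<close>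
type_synonym 'x clause = "'x lit set"
type_synonym 'x cnf = "'x clause set"
type_synonym 'x passign = "'x \<rightharpoonup> bool"

definition sat_clause :: "('x \<Rightarrow> bool) \<Rightarrow> 'x clause \<Rightarrow> bool" where
  "sat_clause \<alpha> C \<longleftrightarrow> (\<exists>(x,b)\<in>C. \<alpha> x = b)"

definition sat_cnf :: "('x \<Rightarrow> bool) \<Rightarrow> 'x cnf \<Rightarrow> bool" where
  "sat_cnf \<alpha> \<phi> \<longleftrightarrow> (\<forall>C\<in>\<phi>. sat_clause \<alpha> C)"

definition vars_cnf :: "'x cnf \<Rightarrow> 'x set" where
  "vars_cnf \<phi> = fst ` \<Union>\<phi>"

definition is_cnf :: "'x cnf \<Rightarrow> bool" where
  "is_cnf \<phi> \<longleftrightarrow> finite \<phi> \<and> (\<forall>C\<in>\<phi>. finite C)"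

definition assignments :: "'x set \<Rightarrow> 'x passign set" where
  "assignments W = {\<sigma>. dom \<sigma> = W}"

definition sat_term :: "('x \<Rightarrow> bool) \<Rightarrow> 'x passign \<Rightarrow> bool" where
  "sat_term \<alpha> \<sigma> \<longleftrightarrow> (\<forall>x b. \<sigma> x = Some b \<longrightarrow> \<alpha> x = b)"

definition neg_clause :: "'x passign \<Rightarrow> 'x clause" where
  "neg_clause \<sigma> = {(x, \<not> b) | x b. \<sigma> x = Some b}"

text \<open>Prefix: universal variables, existential variables, dependency sets; and a CNF matrix.
  (The semantics of a DQBF does not depend on the order of the quantifiers in the prefix.)\<close>
datatype 'x dqbf = DQBF (univs: "'x set") (exs: "'x set") (deps: "'x \<Rightarrow> 'x set") (matrix: "'x cnf")

definition wf_dqbf :: "'x dqbf \<Rightarrow> bool" where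
  "wf_dqbf \<Phi> \<longleftrightarrow> finite (univs \<Phi>) \<and> finite (exs \<Phi>) \<and> univs \<Phi> \<inter> exs \<Phi> = {}
     \<and> (\<forall>e\<in>exs \<Phi>. deps \<Phi> e \<subseteq> univs \<Phi>)
     \<and> is_cnf (matrix \<Phi>) \<and> vars_cnf (matrix \<Phi>) \<subseteq> univs \<Phi> \<union> exs \<Phi>"

text \<open>sigma \<union> F(sigma), as a total assignment (variables outside U \<union> E get an arbitrary value).\<close>
definition extend :: "'x dqbf \<Rightarrow> ('x \<Rightarrow> 'x passign \<Rightarrow> bool) \<Rightarrow> 'x passign \<Rightarrow> 'x \<Rightarrow> bool" where
  "extend \<Phi> F \<sigma> x =
     (if x \<in> univs \<Phi> then the (\<sigma> x)
      else if x \<in> exs \<Phi> then F x (\<sigma> |` deps \<Phi> x) else False)"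

text \<open>A model: for each existential e a function F_e : [D(e)] \<rightarrow> bool (only its values on [D(e)] matter).\<close>
definition is_model :: "'x dqbf \<Rightarrow> ('x \<Rightarrow> 'x passign \<Rightarrow> bool) \<Rightarrow> bool" where
  "is_model \<Phi> F \<longleftrightarrow> (\<forall>\<sigma>\<in>assignments (univs \<Phi>). sat_cnf (extend \<Phi> F \<sigma>) (matrix \<Phi>))"

definition dqbf_true :: "'x dqbf \<Rightarrow> bool" where
  "dqbf_true \<Phi> \<longleftrightarrow> (\<exists>F. is_model \<Phi> F)"

text \<open>Variables of the extended formula: original variables, and fresh arbiter variables e^sigma.\<close>
datatype 'v avar = V 'v | Arb 'v "'v passign"

definition lift_cnf :: "'v cnf \<Rightarrow> 'v avar cnf" where
  "lift_cnf \<phi> = (\<lambda>C. (\<lambda>(x,b). (V x, b)) ` C) ` \<phi>"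

definition lift_assign :: "'v passign \<Rightarrow> 'v avar passign" where
  "lift_assign \<sigma> y = (case y of V x \<Rightarrow> \<sigma> x | Arb _ _ \<Rightarrow> None)"

definition arbiter_vars :: "'v dqbf \<Rightarrow> 'v avar set" where
  "arbiter_vars \<Phi> = {Arb e \<sigma> | e \<sigma>. e \<in> exs \<Phi> \<and> \<sigma> \<in> assignments (deps \<Phi> e)}"

definition arbiter_clauses :: "'v avar set \<Rightarrow> 'v avar cnf" where
  "arbiter_clauses A =
     (\<Union>a\<in>A. case a of
        Arb e \<sigma> \<Rightarrow> {insert (Arb e \<sigma>, True) (insert (V e, False) (neg_clause (lift_assign \<sigma>))),
                    insert (Arb e \<sigma>, False) (insert (V e, True) (neg_clause (lift_assign \<sigma>)))}
      | V _ \<Rightarrow> {})"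

definition extend_prefix :: "'v dqbf \<Rightarrow> 'v avar set \<Rightarrow> 'v avar cnf \<Rightarrow> 'v avar dqbf" where
  "extend_prefix \<Phi> A \<psi> =
     DQBF (V ` univs \<Phi>) (V ` exs \<Phi> \<union> A)
          (\<lambda>y. case y of V x \<Rightarrow> V ` deps \<Phi> x | Arb _ _ \<Rightarrow> {}) \<psi>"

definition forced :: "'x cnf \<Rightarrow> 'x passign \<Rightarrow> 'x lit \<Rightarrow> bool" where
  "forced \<psi> \<sigma> l \<longleftrightarrow> \<not> (\<exists>\<alpha>. sat_cnf \<alpha> \<psi> \<and> sat_term \<alpha> \<sigma> \<and> \<alpha> (fst l) \<noteq> snd l)"

definition forcing_clause :: "'v dqbf \<Rightarrow> 'v avar set \<Rightarrow> 'v avar cnf \<Rightarrow> 'v avar clause \<Rightarrow> bool" where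
  "forcing_clause \<Phi> A \<psi> C \<longleftrightarrow>
     vars_cnf \<psi> \<subseteq> V ` univs \<Phi> \<union> V ` exs \<Phi> \<union> A \<and>
     (\<exists>e b \<sigma>. e \<in> exs \<Phi> \<and> dom \<sigma> \<subseteq> V ` univs \<Phi> \<union> A \<and>
        forced \<psi> \<sigma> (V e, b) \<and>
        C = insert (V e, b) (neg_clause (\<sigma> |` (V ` deps \<Phi> e \<union> A))))"

end

theory Submission
  imports Defs
begin

text \<open>A model F of \<Phi> becomes a model of the extended formula once every arbiter e^\<sigma> is
  given the constant value F_e(\<sigma>); the arbiter clauses then say exactly that e^\<sigma>
  agrees with e whenever the universals look like \<sigma>. Every model G of a matrix \<psi> also satisfies
  each forcing clause \<not>(\<sigma>|_{D(e) \<union> A}) \<or> \<ell> in \<psi>: if under some universal assignment \<tau> the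
  values of G satisfy \<sigma>|_{D(e) \<union> A}, overwrite \<tau> by \<sigma> on the universals. Arbiters do
  not depend on universals, so the new assignment satisfies \<psi> \<and> \<sigma> and hence \<ell>; and the value of
  e is unchanged, because \<tau> already agreed with \<sigma> on D(e). Conversely, a model of the extended
  formula restricts to a model of \<Phi>, since its matrix contains the lifted \<phi>.\<close>

lemma sat_clause_insert: "sat_clause \<alpha> (insert l C) \<longleftrightarrow> \<alpha> (fst l) = snd l \<or> sat_clause \<alpha> C"
  by (cases l) (simp add: sat_clause_def)

lemma sat_clause_neg_clause: "sat_clause \<alpha> (neg_clause \<sigma>) \<longleftrightarrow> \<not> sat_term \<alpha> \<sigma>"
  by (auto simp: sat_clause_def neg_clause_def sat_term_def)

lemma sat_cnf_Un: "sat_cnf \<alpha> (\<phi> \<union> \<psi>) \<longleftrightarrow> sat_cnf \<alpha> \<phi> \<and> sat_cnf \<alpha> \<psi>"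
  by (auto simp: sat_cnf_def)

lemma sat_cnf_lift_cnf: "sat_cnf \<alpha> (lift_cnf \<phi>) \<longleftrightarrow> sat_cnf (\<alpha> \<circ> V) \<phi>"
  by (simp add: sat_cnf_def lift_cnf_def sat_clause_def case_prod_beta)

lemma lift_assign_V [simp]: "lift_assign \<sigma> (V x) = \<sigma> x"
  by (simp add: lift_assign_def)

lemma sat_term_lift_assign: "sat_term \<alpha> (lift_assign \<sigma>) \<longleftrightarrow> sat_term (\<alpha> \<circ> V) \<sigma>"
  by (auto simp: sat_term_def lift_assign_def split: avar.splits)

lemma lift_assign_comp_V: "lift_assign \<sigma> \<circ> V = \<sigma>"
  by (simp add: fun_eq_iff)

lemma lift_assign_restrict_comp_V: "lift_assign ((\<tau> \<circ> V) |` D) = \<tau> |` (V ` D)"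
  by (auto simp: fun_eq_iff restrict_map_def lift_assign_def split: avar.splits)

lemma dom_lift_assign: "dom (lift_assign \<sigma>) = V ` dom \<sigma>"
proof (rule set_eqI)
  show "y \<in> dom (lift_assign \<sigma>) \<longleftrightarrow> y \<in> V ` dom \<sigma>" for y
    by (cases y) (auto simp: lift_assign_def)
qed

lemma lift_assign_in_assignments: "\<sigma> \<in> assignments D \<Longrightarrow> lift_assign \<sigma> \<in> assignments (V ` D)"
  by (simp add: assignments_def dom_lift_assign)

lemma comp_V_in_assignments: "\<tau> \<in> assignments (V ` D) \<Longrightarrow> \<tau> \<circ> V \<in> assignments D"
  by (auto simp: assignments_def dom_def set_eq_iff image_iff)

lemma assignment_eq_extend:
  "\<sigma> \<in> assignments (univs \<Phi>) \<Longrightarrow> x \<in> univs \<Phi> \<Longrightarrow> \<sigma> x = Some (extend \<Phi> F \<sigma> x)"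
  by (cases "\<sigma> x") (auto simp: assignments_def extend_def)

lemma restrict_eq_if_sat_term_extend:
  assumes "\<sigma>\<^sub>0 \<in> assignments (univs \<Phi>)" "\<sigma> \<in> assignments D" "D \<subseteq> univs \<Phi>"
    and "sat_term (extend \<Phi> F \<sigma>\<^sub>0) \<sigma>"
  shows "\<sigma>\<^sub>0 |` D = \<sigma>"
proof
  fix x
  show "(\<sigma>\<^sub>0 |` D) x = \<sigma> x"
  proof (cases "x \<in> D")
    case True
    then show ?thesis
      using assms assignment_eq_extend[of \<sigma>\<^sub>0 \<Phi> x F]
      by (auto simp: assignments_def sat_term_def)
  next
    case False
    then show ?thesis using assms(2) by (auto simp: assignments_def)
  qed
qed

text \<open>The existentials in Z play the role of the arbiter variables; having empty dependency
  sets, they keep their values when the universal assignment is changed.\<close>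

lemma model_satisfies_forcing_clause:
  assumes model: "is_model P G"
    and forced: "forced (matrix P) \<sigma> (x, b)"
    and x: "x \<in> exs P" "x \<notin> univs P"
    and dom: "dom \<sigma> \<subseteq> univs P \<union> Z"
    and Z: "\<forall>z\<in>Z. z \<in> exs P \<and> z \<notin> univs P \<and> deps P z = {}"
    and \<tau>: "\<tau> \<in> assignments (univs P)"
  shows "sat_clause (extend P G \<tau>) (insert (x, b) (neg_clause (\<sigma> |` (deps P x \<union> Z))))"
proof -
  have "extend P G \<tau> x = b" if sat: "sat_term (extend P G \<tau>) (\<sigma> |` (deps P x \<union> Z))"
  proof -
    define \<tau>' where "\<tau>' = \<tau> ++ \<sigma> |` univs P"
    have \<tau>_agrees: "\<tau> y = Some c" if "y \<in> univs P" "y \<in> deps P x" "\<sigma> y = Some c" for y c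
      using that sat assignment_eq_extend[OF \<tau>, of y G] by (auto simp: sat_term_def)
    have \<tau>': "\<tau>' \<in> assignments (univs P)"
      using \<tau> by (auto simp: assignments_def \<tau>'_def)
    have Z_same: "extend P G \<tau>' z = extend P G \<tau> z" if "z \<in> Z" for z
      using that Z by (simp add: extend_def)
    have "sat_term (extend P G \<tau>') \<sigma>"
      unfolding sat_term_def
    proof (intro allI impI)
      fix y c
      assume yc: "\<sigma> y = Some c"
      with dom consider "y \<in> univs P" | "y \<in> Z" by blast
      then show "extend P G \<tau>' y = c"
      proof cases
        case 1
        then show ?thesis using yc by (simp add: extend_def \<tau>'_def)
      next
        case 2
        then show ?thesis using yc sat Z_same by (auto simp: sat_term_def)
      qed
    qed
    moreover have "sat_cnf (extend P G \<tau>') (matrix P)"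
      using model \<tau>' by (simp add: is_model_def)
    ultimately have "extend P G \<tau>' x = b"
      using forced by (auto simp: forced_def)
    moreover have "\<tau>' |` deps P x = \<tau> |` deps P x"
    proof
      show "(\<tau>' |` deps P x) y = (\<tau> |` deps P x) y" for y
        using \<tau>_agrees[of y] by (auto simp: \<tau>'_def map_add_def restrict_map_def split: option.split)
    qed
    ultimately show ?thesis using x by (simp add: extend_def)
  qed
  then show ?thesis by (auto simp: sat_clause_insert sat_clause_neg_clause)
qed

definition proj_model :: "('v avar \<Rightarrow> 'v avar passign \<Rightarrow> bool) \<Rightarrow> 'v \<Rightarrow> 'v passign \<Rightarrow> bool" where
  "proj_model G = (\<lambda>x \<rho>. G (V x) (lift_assign \<rho>))"

definition arbiter_model :: "('v \<Rightarrow> 'v passign \<Rightarrow> bool) \<Rightarrow> 'v avar \<Rightarrow> 'v avar passign \<Rightarrow> bool" where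
  "arbiter_model F = (\<lambda>y \<rho>. case y of V x \<Rightarrow> F x (\<rho> \<circ> V) | Arb e \<sigma> \<Rightarrow> F e \<sigma>)"

lemma proj_arbiter_model: "proj_model (arbiter_model F) = F"
  by (simp add: fun_eq_iff proj_model_def arbiter_model_def lift_assign_comp_V)

lemma arbiter_vars_disjoint_V: "A \<subseteq> arbiter_vars \<Phi> \<Longrightarrow> A \<inter> range V = {}"
  by (auto simp: arbiter_vars_def)

lemma extend_extend_prefix_comp_V:
  assumes "A \<inter> range V = {}"
  shows "extend (extend_prefix \<Phi> A \<psi>) G \<tau> \<circ> V = extend \<Phi> (proj_model G) (\<tau> \<circ> V)"
  using assms
  by (auto simp: fun_eq_iff extend_def extend_prefix_def proj_model_def lift_assign_restrict_comp_V)

lemma extend_extend_prefix_Arb: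
  "Arb e \<sigma> \<in> A \<Longrightarrow> extend (extend_prefix \<Phi> A \<psi>) G \<tau> (Arb e \<sigma>) = G (Arb e \<sigma>) Map.empty"
  by (auto simp: extend_def extend_prefix_def)

lemma extend_extend_prefix_matrix:
  "extend (extend_prefix \<Phi> A \<psi>) = extend (extend_prefix \<Phi> A \<psi>')"
  by (simp add: fun_eq_iff extend_def extend_prefix_def)

lemma is_model_extend_prefix_iff:
  "is_model (extend_prefix \<Phi> A \<psi>) G \<longleftrightarrow>
     (\<forall>\<tau>\<in>assignments (V ` univs \<Phi>). sat_cnf (extend (extend_prefix \<Phi> A {}) G \<tau>) \<psi>)"
  using extend_extend_prefix_matrix[of \<Phi> A \<psi> "{}"] by (simp add: is_model_def extend_prefix_def)

lemma is_model_extend_prefix_Un: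
  "is_model (extend_prefix \<Phi> A (\<psi> \<union> \<psi>')) G \<longleftrightarrow>
     is_model (extend_prefix \<Phi> A \<psi>) G \<and> is_model (extend_prefix \<Phi> A \<psi>') G"
  by (auto simp: is_model_extend_prefix_iff sat_cnf_Un)

lemma is_model_extend_prefix_lift_cnf_iff:
  assumes "A \<inter> range V = {}"
  shows "is_model (extend_prefix \<Phi> A (lift_cnf (matrix \<Phi>))) G \<longleftrightarrow> is_model \<Phi> (proj_model G)"
proof -
  have "is_model (extend_prefix \<Phi> A (lift_cnf (matrix \<Phi>))) G \<longleftrightarrow>
    (\<forall>\<tau>\<in>assignments (V ` univs \<Phi>). sat_cnf (extend \<Phi> (proj_model G) (\<tau> \<circ> V)) (matrix \<Phi>))"
    using extend_extend_prefix_comp_V[OF assms]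
    by (simp add: is_model_def extend_prefix_def sat_cnf_lift_cnf)
  also have "\<dots> \<longleftrightarrow> is_model \<Phi> (proj_model G)"
    unfolding is_model_def
    by (metis comp_V_in_assignments lift_assign_in_assignments lift_assign_comp_V)
  finally show ?thesis .
qed

lemma sat_arbiter_clauses_iff:
  "sat_cnf \<alpha> (arbiter_clauses A) \<longleftrightarrow>
     (\<forall>e \<sigma>. Arb e \<sigma> \<in> A \<longrightarrow> sat_term \<alpha> (lift_assign \<sigma>) \<longrightarrow> \<alpha> (Arb e \<sigma>) = \<alpha> (V e))"
proof -
  have "sat_cnf \<alpha> (arbiter_clauses A) \<longleftrightarrow>
    (\<forall>a\<in>A. \<forall>e \<sigma>. a = Arb e \<sigma> \<longrightarrow> sat_term \<alpha> (lift_assign \<sigma>) \<longrightarrow> \<alpha> (Arb e \<sigma>) = \<alpha> (V e))"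
    by (auto simp: sat_cnf_def arbiter_clauses_def sat_clause_insert sat_clause_neg_clause
        split: avar.splits)
  then show ?thesis by blast
qed

lemma is_model_arbiter_clauses:
  assumes "univs \<Phi> \<inter> exs \<Phi> = {}" "\<forall>e\<in>exs \<Phi>. deps \<Phi> e \<subseteq> univs \<Phi>" "A \<subseteq> arbiter_vars \<Phi>"
  shows "is_model (extend_prefix \<Phi> A (arbiter_clauses A)) (arbiter_model F)"
  unfolding is_model_def
proof
  fix \<tau>
  assume \<tau>: "\<tau> \<in> assignments (univs (extend_prefix \<Phi> A (arbiter_clauses A)))"
  define \<alpha> where "\<alpha> = extend (extend_prefix \<Phi> A (arbiter_clauses A)) (arbiter_model F) \<tau>"
  have \<alpha>_V: "\<alpha> \<circ> V = extend \<Phi> F (\<tau> \<circ> V)"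
    unfolding \<alpha>_def extend_extend_prefix_comp_V[OF arbiter_vars_disjoint_V[OF assms(3)]]
    by (simp add: proj_arbiter_model)
  have \<tau>V: "\<tau> \<circ> V \<in> assignments (univs \<Phi>)"
    using \<tau> by (simp add: extend_prefix_def comp_V_in_assignments)
  have "\<alpha> (Arb e \<sigma>) = \<alpha> (V e)"
    if "Arb e \<sigma> \<in> A" and sat: "sat_term \<alpha> (lift_assign \<sigma>)" for e \<sigma>
  proof -
    have e: "e \<in> exs \<Phi>" "e \<notin> univs \<Phi>" and \<sigma>: "\<sigma> \<in> assignments (deps \<Phi> e)"
      using that(1) assms by (auto simp: arbiter_vars_def)
    have "(\<tau> \<circ> V) |` deps \<Phi> e = \<sigma>"
      using restrict_eq_if_sat_term_extend[OF \<tau>V \<sigma>] sat e assms(2)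
      by (simp add: sat_term_lift_assign \<alpha>_V)
    then have "\<alpha> (V e) = F e \<sigma>"
      using e fun_cong[OF \<alpha>_V, of e] by (simp add: extend_def)
    then show ?thesis
      using that(1) by (simp add: \<alpha>_def extend_extend_prefix_Arb arbiter_model_def)
  qed
  then show "sat_cnf \<alpha> (matrix (extend_prefix \<Phi> A (arbiter_clauses A)))"
    by (simp add: extend_prefix_def sat_arbiter_clauses_iff)
qed

lemma is_model_extend_prefix_insert_forcing_clause:
  assumes "univs \<Phi> \<inter> exs \<Phi> = {}" "A \<inter> range V = {}"
    and model: "is_model (extend_prefix \<Phi> A \<psi>) G"
    and "forcing_clause \<Phi> A \<psi> C"
  shows "is_model (extend_prefix \<Phi> A (insert C \<psi>)) G"
proof -
  obtain e b \<sigma> where e: "e \<in> exs \<Phi>" and dom: "dom \<sigma> \<subseteq> V ` univs \<Phi> \<union> A"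
    and forced: "forced \<psi> \<sigma> (V e, b)"
    and C: "C = insert (V e, b) (neg_clause (\<sigma> |` (V ` deps \<Phi> e \<union> A)))"
    using assms(4) by (auto simp: forcing_clause_def)
  let ?P = "extend_prefix \<Phi> A \<psi>"
  have A: "\<forall>a\<in>A. a \<in> exs ?P \<and> a \<notin> univs ?P \<and> deps ?P a = {}"
    using assms(2) by (auto simp: extend_prefix_def split: avar.split)
  have e': "V e \<in> exs ?P" "V e \<notin> univs ?P" and deps: "deps ?P (V e) = V ` deps \<Phi> e"
    using e assms(1) by (auto simp: extend_prefix_def)
  have forced': "forced (matrix ?P) \<sigma> (V e, b)" and dom': "dom \<sigma> \<subseteq> univs ?P \<union> A"
    using forced dom by (simp_all add: extend_prefix_def)
  have "sat_cnf (extend ?P G \<tau>) {C}" if "\<tau> \<in> assignments (univs ?P)" for \<tau>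
    using model_satisfies_forcing_clause[OF model forced' e' dom' A that]
    by (simp add: sat_cnf_def deps C)
  then have "is_model (extend_prefix \<Phi> A {C}) G"
    using extend_extend_prefix_matrix[of \<Phi> A "{C}" \<psi>] by (simp add: is_model_def extend_prefix_def)
  with model show ?thesis using is_model_extend_prefix_Un[of \<Phi> A \<psi> "{C}" G] by simp
qed

lemma is_model_extend_prefix_forcing_clauses:
  assumes "univs \<Phi> \<inter> exs \<Phi> = {}" "A \<inter> range V = {}"
    and "is_model (extend_prefix \<Phi> A \<psi>) G"
    and "\<forall>i < length Cs. forcing_clause \<Phi> A (\<psi> \<union> set (take i Cs)) (Cs ! i)"
  shows "is_model (extend_prefix \<Phi> A (\<psi> \<union> set Cs)) G"
  using assms(4)
proof (induction Cs rule: rev_induct)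
  case Nil
  then show ?case using assms(3) by simp
next
  case (snoc C Cs)
  have "forcing_clause \<Phi> A (\<psi> \<union> set (take i Cs)) (Cs ! i)" if "i < length Cs" for i
    using snoc.prems[rule_format, of i] that by (simp add: nth_append)
  moreover have "forcing_clause \<Phi> A (\<psi> \<union> set Cs) C"
    using snoc.prems[rule_format, of "length Cs"] by simp
  ultimately have "is_model (extend_prefix \<Phi> A (insert C (\<psi> \<union> set Cs))) G"
    using snoc.IH by (blast intro: is_model_extend_prefix_insert_forcing_clause[OF assms(1,2)])
  then show ?case by simp
qed

theorem corollary3:
  fixes \<Phi> :: "'v dqbf" and A :: "'v avar set" and Cs :: "'v avar clause list"
  assumes "wf_dqbf \<Phi>"
    and "A \<subseteq> arbiter_vars \<Phi>"
    and "\<forall>i < length Cs. forcing_clause \<Phi> A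
           (lift_cnf (matrix \<Phi>) \<union> arbiter_clauses A \<union> set (take i Cs)) (Cs ! i)"
  shows "dqbf_true (extend_prefix \<Phi> A (lift_cnf (matrix \<Phi>) \<union> arbiter_clauses A \<union> set Cs))
           \<longleftrightarrow> dqbf_true \<Phi>"
proof -
  have A: "A \<inter> range V = {}" using assms(2) by (rule arbiter_vars_disjoint_V)
  have wf: "univs \<Phi> \<inter> exs \<Phi> = {}" "\<forall>e\<in>exs \<Phi>. deps \<Phi> e \<subseteq> univs \<Phi>"
    using assms(1) by (auto simp: wf_dqbf_def)
  show ?thesis
  proof
    assume "dqbf_true (extend_prefix \<Phi> A (lift_cnf (matrix \<Phi>) \<union> arbiter_clauses A \<union> set Cs))"
    then obtain G where "is_model (extend_prefix \<Phi> A (lift_cnf (matrix \<Phi>))) G"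
      by (auto simp: dqbf_true_def is_model_extend_prefix_Un)
    then show "dqbf_true \<Phi>"
      using is_model_extend_prefix_lift_cnf_iff[OF A] by (auto simp: dqbf_true_def)
  next
    assume "dqbf_true \<Phi>"
    then obtain F where "is_model \<Phi> F" by (auto simp: dqbf_true_def)
    then have "is_model (extend_prefix \<Phi> A (lift_cnf (matrix \<Phi>) \<union> arbiter_clauses A)) (arbiter_model F)"
      using is_model_extend_prefix_lift_cnf_iff[OF A] is_model_arbiter_clauses[OF wf assms(2)]
      by (simp add: is_model_extend_prefix_Un proj_arbiter_model)
    then show "dqbf_true (extend_prefix \<Phi> A (lift_cnf (matrix \<Phi>) \<union> arbiter_clauses A \<union> set Cs))"
      using is_model_extend_prefix_forcing_clauses[OF wf(1) A _ assms(3)] by (auto simp: dqbf_true_def)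
  qed
qed

end
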